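(* Let $\hat\kappa>0$ and $\mathbb{W}\in\mathbb{R}$. For each $\mathbb{W}'\in\mathbb{R}$ let $\alpha^*_{\hat\kappa}(\mathbb{W}')=\mathrm{Prob}(W^*_T<\mathbb{W}')$, where $W^*_T$ is the terminal wealth under an optimal control $\mathcal{P}^*_0$ of $\text{EW-LS}_{t_0}(\mathbb{W}',\hat\kappa)$, and let $\mathcal{D}^+_{LS}=\{(\mathbb{W}',\hat\kappa'):\hat\kappa'>0,\ 0<\alpha^*_{\hat\kappa'}(\mathbb{W}')<1\}$. Suppose $(\mathbb{W},\hat\kappa)\in\mathcal{D}^+_{LS}$ and that the following invertibility assumption holds at $(\mathbb{W},\hat\kappa)$: $\alpha^*_{\hat\kappa}(\cdot)$ is well defined (its value does not depend on the choice of optimal control) and for every $\mathbb{W}'\ne\mathbb{W}$ with $(\mathbb{W}',\hat\kappa)\in\mathcal{D}^+_{LS}$ we have $\alpha^*_{\hat\kappa}(\mathbb{W}')\ne\alpha^*_{\hat\kappa}(\mathbb{W})$. Then, writing $\alpha^*=\alpha^*_{\hat\kappa}(\mathbb{W})$, we have $(\alpha^*,\alpha^*\hat\kappa)\in\{(\alpha,\kappa):0<\alpha<1,\kappa>0\}$, and any solution of $\text{EW-LS}_{t_0}(\mathbb{W},\hat\kappa)$ is a solution of $\text{EW-ES}_{t_0}(\alpha^*,\alpha^*\hat\kappa)$.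
   Context: Decumulation problem on horizon $[0,T]$. Two assets: a stock index and a bond index; $S_t$, $B_t$ denote the real amounts invested, $W_t=S_t+B_t$. Between rebalancing times they evolve without control as jump diffusions $\frac{dS_t}{S_{t^-}}=(\mu^s-\lambda^s\gamma^s)dt+\sigma^s dZ^s+d\big(\sum_{i=1}^{\pi^s_t}(\xi^s_i-1)\big)$, $\frac{dB_t}{B_{t^-}}=(\mu^b-\lambda^b\gamma^b+\mu^b_c\mathbf 1_{\{B_{t^-}<0\}})dt+\sigma^b dZ^b+d\big(\sum_{i=1}^{\pi^b_t}(\xi^b_i-1)\big)$, where $\pi^s,\pi^b$ are Poisson processes with intensities $\lambda^s,\lambda^b$, $\log\xi^{s},\log\xi^b$ are i.i.d. double-exponential jump sizes, $\gamma^{s}=E[\xi^s-1]$, $\gamma^b=E[\xi^b-1]$, $dZ^s dZ^b=\rho_{sb}dt$, and the jump processes are independent of each other and of the Brownian motions. Rebalancing times $t_0=0<t_1<\dots<t_M=T$, equally spaced. At each $t_i$ the investor withdraws $\mathfrak{q}_i$, so $W(t_i^+)=W(t_i^-)-\mathfrak{q}_i$, then sets $S(t_i^+)=\mathfrak{p}_iW(t_i^+)$, $B(t_i^+)=(1-\mathfrak{p}_i)W(t_i^+)$. Controls $(\mathfrak{q}_i,\mathfrak{p}_i)$ are feedback functions of the state $(S(t_i^-),B(t_i^-))$ and $t_i$. Admissibility: for $i<M$, $\mathfrak{q}_i\in[\mathfrak{q}_{\min},\mathfrak{q}_{\max}]$ if $W_i^-\ge\mathfrak{q}_{\max}$ and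 $\mathfrak{q}_i\in[\mathfrak{q}_{\min},\max(\mathfrak{q}_{\min},W_i^-)]$ if $W_i^-<\mathfrak{q}_{\max}$; $\mathfrak{q}_M=0$; $\mathfrak{p}_i\in[0,1]$ if $W_i^+>0$ and $i<M$, $\mathfrak{p}_i=0$ if $W_i^+\le 0$ or $i=M$. $\mathcal{A}$ is the set of admissible controls $\mathcal{P}_0=\{(\mathfrak{q}_i,\mathfrak{p}_i)\}_{i=0}^M$. $E_{\mathcal{P}_0}^{(s,b),t_0^-}$ is expectation under control $\mathcal{P}_0$ given initial state $(S(t_0^-),B(t_0^-))=(s,b)$; $W_T$ is terminal wealth; $\epsilon$ is a fixed real stabilization constant. Standing assumption: the terminal wealth $W_T$ has a continuous distribution. $\text{EW-LS}_{t_0}(\mathbb{W},\hat\kappa)$: $\sup_{\mathcal{P}_0\in\mathcal{A}} E_{\mathcal{P}_0}^{(s,b),t_0^-}\big[\sum_{i=0}^M\mathfrak{q}_i+\hat\kappa\min(W_T-\mathbb{W},0)+\epsilon W_T\big]$. $\text{EW-ES}_{t_0}(\alpha,\kappa)$: $\sup_{\mathcal{P}_0\in\mathcal{A}} E_{\mathcal{P}_0}^{(s,b),t_0^-}\big[\sum_{i=0}^M\mathfrak{q}_i+\kappa\sup_{W'}\big(W'+\tfrac1\alpha\min(W_T-W',0)\big)+\epsilon W_T\big]$, equivalently $\sup_{W'}\sup_{\mathcal{P}_0}E[\sum\mathfrak{q}_i+\kappa(W'+\tfrac1\alpha\min(W_T-W',0))+\epsilon W_T]$; for each $(\alpha,\kappa)$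 the maximizing $W'$ (denoted $\mathbb{W}^*$) is assumed to exist. *)

theory Defs
  imports "HOL-Probability.Probability"
begin

text \<open>M : the underlying probability space; A : the set of admissible controls;
  Qs P : total withdrawals sum_i q_i under control P (random variable);
  WT P : terminal wealth W_T under control P (random variable);
  eps : the stabilization constant.\<close>

definition LS_obj :: "'w measure \<Rightarrow> ('c \<Rightarrow> 'w \<Rightarrow> real) \<Rightarrow> ('c \<Rightarrow> 'w \<Rightarrow> real)
    \<Rightarrow> real \<Rightarrow> real \<Rightarrow> real \<Rightarrow> 'c \<Rightarrow> real" where
  "LS_obj M Qs WT eps Wb kh P =
     (\<integral>\<omega>. Qs P \<omega> + kh * min (WT P \<omega> - Wb) 0 + eps * WT P \<omega> \<partial>M)"

definition LS_opt :: "'w measure \<Rightarrow> 'c set \<Rightarrow> ('c \<Rightarrow> 'w \<Rightarrow> real) \<Rightarrow> ('c \<Rightarrow> 'w \<Rightarrow> real)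
    \<Rightarrow> real \<Rightarrow> real \<Rightarrow> real \<Rightarrow> 'c \<Rightarrow> bool" where
  "LS_opt M A Qs WT eps Wb kh P \<longleftrightarrow>
     P \<in> A \<and> (\<forall>P'\<in>A. LS_obj M Qs WT eps Wb kh P' \<le> LS_obj M Qs WT eps Wb kh P)"

definition ES_inner :: "'w measure \<Rightarrow> ('c \<Rightarrow> 'w \<Rightarrow> real) \<Rightarrow> ('c \<Rightarrow> 'w \<Rightarrow> real)
    \<Rightarrow> real \<Rightarrow> real \<Rightarrow> real \<Rightarrow> real \<Rightarrow> 'c \<Rightarrow> real" where
  "ES_inner M Qs WT eps \<alpha> \<kappa> W' P =
     (\<integral>\<omega>. Qs P \<omega> + \<kappa> * (W' + (1/\<alpha>) * min (WT P \<omega> - W') 0) + eps * WT P \<omega> \<partial>M)"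

definition ES_obj :: "'w measure \<Rightarrow> ('c \<Rightarrow> 'w \<Rightarrow> real) \<Rightarrow> ('c \<Rightarrow> 'w \<Rightarrow> real)
    \<Rightarrow> real \<Rightarrow> real \<Rightarrow> real \<Rightarrow> 'c \<Rightarrow> real" where
  "ES_obj M Qs WT eps \<alpha> \<kappa> P = (SUP W'. ES_inner M Qs WT eps \<alpha> \<kappa> W' P)"

definition ES_opt :: "'w measure \<Rightarrow> 'c set \<Rightarrow> ('c \<Rightarrow> 'w \<Rightarrow> real) \<Rightarrow> ('c \<Rightarrow> 'w \<Rightarrow> real)
    \<Rightarrow> real \<Rightarrow> real \<Rightarrow> real \<Rightarrow> 'c \<Rightarrow> bool" where
  "ES_opt M A Qs WT eps \<alpha> \<kappa> P \<longleftrightarrow>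
     P \<in> A \<and> (\<forall>P'\<in>A. ES_obj M Qs WT eps \<alpha> \<kappa> P' \<le> ES_obj M Qs WT eps \<alpha> \<kappa> P)"

definition prob_below :: "'w measure \<Rightarrow> ('c \<Rightarrow> 'w \<Rightarrow> real) \<Rightarrow> 'c \<Rightarrow> real \<Rightarrow> real" where
  "prob_below M WT P W' = measure M {\<omega> \<in> space M. WT P \<omega> < W'}"

text \<open>alpha*_kh(W') = Prob(W*_T < W') for an optimal control of EW-LS(W', kh)
  (chosen by Hilbert choice; well-definedness is a hypothesis of the theorem).\<close>
definition alpha_star :: "'w measure \<Rightarrow> 'c set \<Rightarrow> ('c \<Rightarrow> 'w \<Rightarrow> real) \<Rightarrow> ('c \<Rightarrow> 'w \<Rightarrow> real)
    \<Rightarrow> real \<Rightarrow> real \<Rightarrow> real \<Rightarrow> real" where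
  "alpha_star M A Qs WT eps kh W' =
     prob_below M WT (SOME P. LS_opt M A Qs WT eps W' kh P) W'"

definition D_LS :: "'w measure \<Rightarrow> 'c set \<Rightarrow> ('c \<Rightarrow> 'w \<Rightarrow> real) \<Rightarrow> ('c \<Rightarrow> 'w \<Rightarrow> real)
    \<Rightarrow> real \<Rightarrow> (real \<times> real) set" where
  "D_LS M A Qs WT eps = {(W', kh'). kh' > 0 \<and> 0 < alpha_star M A Qs WT eps kh' W'
                                     \<and> alpha_star M A Qs WT eps kh' W' < 1}"

end

theory Submission
  imports Defs
begin

text \<open>With \<open>\<kappa> = \<alpha> * kh\<close>, the inner EW-ES objective at level \<open>W'\<close> equals \<open>\<kappa> * W'\<close> plus the
  EW-LS objective with threshold \<open>W'\<close>.  Hence an EW-LS optimal control at a maximiser \<open>W*\<close> of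
  the EW-ES value function makes \<open>W*\<close> a maximiser of \<open>t \<mapsto> \<alpha> * t + E[min (W_T - t) 0]\<close>;
  comparing one-sided difference quotients, and using that \<open>W_T\<close> has no atoms, gives
  \<open>Prob(W_T < W*) = \<alpha>\<close> (the Rockafellar-Uryasev quantile characterisation).  For
  \<open>\<alpha> = \<alpha>*(Wb)\<close> invertibility forces \<open>W* = Wb\<close>, and then every EW-LS solution at \<open>Wb\<close>
  jointly maximises the inner EW-ES objective over \<open>(W', P)\<close>.\<close>

definition shortfall :: "'a measure \<Rightarrow> ('a \<Rightarrow> real) \<Rightarrow> real \<Rightarrow> real" where
  "shortfall M X t = (\<integral>\<omega>. min (X \<omega> - t) 0 \<partial>M)"

lemma (in finite_measure) shortfall_increment_bounds:
  fixes X :: "'a \<Rightarrow> real"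
  assumes X: "integrable M X" and "s \<le> t"
  shows "- (t - s) * measure M {\<omega>\<in>space M. X \<omega> < t} \<le> shortfall M X t - shortfall M X s"
    and "shortfall M X t - shortfall M X s \<le> - (t - s) * measure M {\<omega>\<in>space M. X \<omega> < s}"
proof -
  have [measurable]: "X \<in> borel_measurable M" using X by auto
  have diff: "shortfall M X t - shortfall M X s = (\<integral>\<omega>. min (X \<omega> - t) 0 - min (X \<omega> - s) 0 \<partial>M)"
    unfolding shortfall_def using X by (intro Bochner_Integration.integral_diff[symmetric]) auto
  have int_min: "integrable M (\<lambda>\<omega>. min (X \<omega> - r) 0)" for r
    using X by auto
  have int_ind: "integrable M (\<lambda>\<omega>. - (t - s) * indicator {\<omega>\<in>space M. X \<omega> < r} \<omega>)" for r
    by (intro integrable_mult_right integrable_real_indicator) (auto simp: less_top[symmetric])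
  have ind: "(\<integral>\<omega>. - (t - s) * indicator {\<omega>\<in>space M. X \<omega> < r} \<omega> \<partial>M)
      = - (t - s) * measure M {\<omega>\<in>space M. X \<omega> < r}" for r
    by simp
  show "- (t - s) * measure M {\<omega>\<in>space M. X \<omega> < t} \<le> shortfall M X t - shortfall M X s"
    unfolding diff ind[symmetric] using X \<open>s \<le> t\<close>
    by (intro integral_mono int_ind Bochner_Integration.integrable_diff int_min)
      (auto simp: indicator_def min_def)
  show "shortfall M X t - shortfall M X s \<le> - (t - s) * measure M {\<omega>\<in>space M. X \<omega> < s}"
    unfolding diff ind[symmetric] using X \<open>s \<le> t\<close>
    by (intro integral_mono int_ind Bochner_Integration.integrable_diff int_min)
      (auto simp: indicator_def min_def)
qed

lemma (in finite_measure) measure_less_eq_if_bracketed: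
  fixes X :: "'a \<Rightarrow> real"
  assumes [measurable]: "X \<in> borel_measurable M"
    and atomless: "measure M {\<omega>\<in>space M. X \<omega> = w} = 0"
    and below: "\<And>d. d > 0 \<Longrightarrow> measure M {\<omega>\<in>space M. X \<omega> < w - d} \<le> c"
    and above: "\<And>d. d > 0 \<Longrightarrow> c \<le> measure M {\<omega>\<in>space M. X \<omega> < w + d}"
  shows "measure M {\<omega>\<in>space M. X \<omega> < w} = c"
proof -
  let ?D = "distr M borel X"
  interpret D: finite_borel_measure ?D
    by (simp add: finite_borel_measure_def finite_measure_distr finite_borel_measure_axioms_def)
  have D: "measure ?D S = measure M {\<omega>\<in>space M. X \<omega> \<in> S}" if "S \<in> sets borel" for S
    using that by (simp add: measure_distr vimage_def Int_def conj_commute)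
  have "c \<le> cdf ?D w"
  proof (rule tendsto_lowerbound)
    show "(cdf ?D \<longlongrightarrow> cdf ?D w) (at_right w)"
      using D.cdf_is_right_cont by (simp add: continuous_within)
    have "c \<le> cdf ?D t" if "w < t" for t
    proof -
      have "c \<le> measure M {\<omega>\<in>space M. X \<omega> < w + (t - w)}"
        using above[of "t - w"] that by simp
      also have "\<dots> \<le> measure M {\<omega>\<in>space M. X \<omega> \<in> {..t}}"
        by (intro finite_measure_mono) auto
      finally show ?thesis by (simp add: cdf_def D)
    qed
    then show "\<forall>\<^sub>F t in at_right w. c \<le> cdf ?D t"
      by (auto intro: eventually_mono[OF eventually_at_right_less])
  qed simp
  moreover have "measure ?D {..<w} \<le> c"
  proof (rule tendsto_upperbound)
    show "(cdf ?D \<longlongrightarrow> measure ?D {..<w}) (at_left w)"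
      by (rule D.cdf_at_left)
    have "cdf ?D t \<le> c" if "t < w" for t
    proof -
      have "measure M {\<omega>\<in>space M. X \<omega> \<in> {..t}} \<le> measure M {\<omega>\<in>space M. X \<omega> < w - (w - t) / 2}"
        using that by (intro finite_measure_mono) (auto simp: field_simps)
      also have "\<dots> \<le> c"
        using below that by simp
      finally show ?thesis by (simp add: cdf_def D)
    qed
    then show "\<forall>\<^sub>F t in at_left w. cdf ?D t \<le> c"
      unfolding eventually_at_left_field by (intro exI[of _ "w - 1"]) auto
  qed simp
  moreover have "cdf ?D w = measure ?D {..<w} + measure ?D {w}"
    unfolding cdf_def ivl_disj_un(2)[symmetric] by (subst D.finite_measure_Union) auto
  ultimately show ?thesis
    using atomless by (simp add: D)
qed

lemma (in finite_measure) measure_less_eq_at_shortfall_argmax: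
  fixes X :: "'a \<Rightarrow> real"
  assumes X: "integrable M X"
    and atomless: "measure M {\<omega>\<in>space M. X \<omega> = w} = 0"
    and argmax: "\<And>t. c * t + shortfall M X t \<le> c * w + shortfall M X w"
  shows "measure M {\<omega>\<in>space M. X \<omega> < w} = c"
proof (rule measure_less_eq_if_bracketed[OF _ atomless])
  show "X \<in> borel_measurable M" using X by auto
next
  fix d :: real assume d: "d > 0"
  have "d * measure M {\<omega>\<in>space M. X \<omega> < w - d} \<le> shortfall M X (w - d) - shortfall M X w"
    using shortfall_increment_bounds(2)[OF X, of "w - d" w] d by simp
  also have "\<dots> \<le> d * c"
    using argmax[of "w - d"] by (simp add: algebra_simps)
  finally show "measure M {\<omega>\<in>space M. X \<omega> < w - d} \<le> c"
    using d by simp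
next
  fix d :: real assume d: "d > 0"
  have "d * c \<le> shortfall M X w - shortfall M X (w + d)"
    using argmax[of "w + d"] by (simp add: algebra_simps)
  also have "\<dots> \<le> d * measure M {\<omega>\<in>space M. X \<omega> < w + d}"
    using shortfall_increment_bounds(1)[OF X, of w "w + d"] d by simp
  finally show "c \<le> measure M {\<omega>\<in>space M. X \<omega> < w + d}"
    using d by simp
qed

lemma ES_opt_if_joint_argmax:
  assumes "P \<in> A"
    and argmax: "\<And>P' t. P' \<in> A \<Longrightarrow> ES_inner M Qs WT eps \<alpha> \<kappa> t P' \<le> ES_inner M Qs WT eps \<alpha> \<kappa> w P"
  shows "ES_opt M A Qs WT eps \<alpha> \<kappa> P"
proof -
  have "ES_obj M Qs WT eps \<alpha> \<kappa> P' \<le> ES_obj M Qs WT eps \<alpha> \<kappa> P" if "P' \<in> A" for P'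
  proof -
    have "ES_obj M Qs WT eps \<alpha> \<kappa> P' \<le> ES_inner M Qs WT eps \<alpha> \<kappa> w P"
      unfolding ES_obj_def using that by (intro cSUP_least argmax) auto
    also have "\<dots> \<le> ES_obj M Qs WT eps \<alpha> \<kappa> P"
      unfolding ES_obj_def using assms by (intro cSUP_upper bdd_aboveI2 argmax) auto
    finally show ?thesis .
  qed
  with assms(1) show ?thesis
    by (simp add: ES_opt_def)
qed

locale decumulation_model = prob_space M for M :: "'w measure" +
  fixes A :: "'c set" and Qs WT :: "'c \<Rightarrow> 'w \<Rightarrow> real" and eps :: real
  assumes integrable_Qs: "P \<in> A \<Longrightarrow> integrable M (Qs P)"
    and integrable_WT: "P \<in> A \<Longrightarrow> integrable M (WT P)"
begin

lemma LS_obj_eq_shortfall: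
  assumes "P \<in> A"
  shows "LS_obj M Qs WT eps t kh P
    = (\<integral>\<omega>. Qs P \<omega> \<partial>M) + kh * shortfall M (WT P) t + eps * (\<integral>\<omega>. WT P \<omega> \<partial>M)"
  using integrable_Qs[OF assms] integrable_WT[OF assms]
  by (simp add: LS_obj_def shortfall_def)

lemma ES_inner_eq_LS_obj:
  assumes "P \<in> A" "\<alpha> \<noteq> 0"
  shows "ES_inner M Qs WT eps \<alpha> (\<alpha> * kh) t P = \<alpha> * kh * t + LS_obj M Qs WT eps t kh P"
proof -
  have "(\<lambda>\<omega>. Qs P \<omega> + \<alpha> * kh * (t + 1 / \<alpha> * min (WT P \<omega> - t) 0) + eps * WT P \<omega>)
      = (\<lambda>\<omega>. \<alpha> * kh * t + (Qs P \<omega> + kh * min (WT P \<omega> - t) 0 + eps * WT P \<omega>))"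
    using assms(2) by (auto simp: field_simps)
  then show ?thesis
    using integrable_Qs[OF assms(1)] integrable_WT[OF assms(1)]
    by (simp add: ES_inner_def LS_obj_def prob_space)
qed

lemma ES_inner_le_if_LS_opt:
  assumes "LS_opt M A Qs WT eps t kh P" "P' \<in> A" "\<alpha> \<noteq> 0"
  shows "ES_inner M Qs WT eps \<alpha> (\<alpha> * kh) t P' \<le> ES_inner M Qs WT eps \<alpha> (\<alpha> * kh) t P"
  using assms by (simp add: LS_opt_def ES_inner_eq_LS_obj)

lemma ES_inner_le_at_value_argmax:
  assumes LS_exists: "\<And>t. \<exists>P. LS_opt M A Qs WT eps t kh P"
    and argmax: "\<And>t. (SUP P\<in>A. ES_inner M Qs WT eps \<alpha> (\<alpha> * kh) t P)
                       \<le> (SUP P\<in>A. ES_inner M Qs WT eps \<alpha> (\<alpha> * kh) w P)"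
    and opt: "LS_opt M A Qs WT eps w kh P"
    and "P' \<in> A" "\<alpha> \<noteq> 0"
  shows "ES_inner M Qs WT eps \<alpha> (\<alpha> * kh) t P' \<le> ES_inner M Qs WT eps \<alpha> (\<alpha> * kh) w P"
proof -
  obtain Q where Q: "LS_opt M A Qs WT eps t kh Q"
    using LS_exists by blast
  have "ES_inner M Qs WT eps \<alpha> (\<alpha> * kh) t P' \<le> (SUP P\<in>A. ES_inner M Qs WT eps \<alpha> (\<alpha> * kh) t P)"
    using Q assms(4,5)
    by (intro cSUP_upper bdd_aboveI2[where M = "ES_inner M Qs WT eps \<alpha> (\<alpha> * kh) t Q"]
        ES_inner_le_if_LS_opt)
  also have "\<dots> \<le> (SUP P\<in>A. ES_inner M Qs WT eps \<alpha> (\<alpha> * kh) w P)"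
    by (rule argmax)
  also have "\<dots> \<le> ES_inner M Qs WT eps \<alpha> (\<alpha> * kh) w P"
    using opt assms(5) by (intro cSUP_least ES_inner_le_if_LS_opt) (auto simp: LS_opt_def)
  finally show ?thesis .
qed

lemma prob_below_eq_at_ES_inner_argmax:
  assumes "P \<in> A" "0 < \<alpha>" "0 < kh"
    and atomless: "measure M {\<omega>\<in>space M. WT P \<omega> = w} = 0"
    and argmax: "\<And>t. ES_inner M Qs WT eps \<alpha> (\<alpha> * kh) t P \<le> ES_inner M Qs WT eps \<alpha> (\<alpha> * kh) w P"
  shows "prob_below M WT P w = \<alpha>"
  unfolding prob_below_def
proof (rule measure_less_eq_at_shortfall_argmax[OF integrable_WT[OF \<open>P \<in> A\<close>] atomless])
  fix t
  have "kh * (\<alpha> * t + shortfall M (WT P) t) \<le> kh * (\<alpha> * w + shortfall M (WT P) w)"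
    using argmax[of t] assms(1,2)
    by (simp add: ES_inner_eq_LS_obj LS_obj_eq_shortfall algebra_simps)
  then show "\<alpha> * t + shortfall M (WT P) t \<le> \<alpha> * w + shortfall M (WT P) w"
    using \<open>0 < kh\<close> by simp
qed

lemma ES_opt_if_LS_opt_at_value_argmax:
  assumes LS_exists: "\<And>t. \<exists>P. LS_opt M A Qs WT eps t kh P"
    and argmax: "\<And>t. (SUP P\<in>A. ES_inner M Qs WT eps \<alpha> (\<alpha> * kh) t P)
                       \<le> (SUP P\<in>A. ES_inner M Qs WT eps \<alpha> (\<alpha> * kh) w P)"
    and opt: "LS_opt M A Qs WT eps w kh P" and "\<alpha> \<noteq> 0"
  shows "ES_opt M A Qs WT eps \<alpha> (\<alpha> * kh) P"
proof (rule ES_opt_if_joint_argmax)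
  show "P \<in> A" using opt by (simp add: LS_opt_def)
  show "ES_inner M Qs WT eps \<alpha> (\<alpha> * kh) t P' \<le> ES_inner M Qs WT eps \<alpha> (\<alpha> * kh) w P"
    if "P' \<in> A" for P' t
    by (rule ES_inner_le_at_value_argmax[OF LS_exists argmax opt that \<open>\<alpha> \<noteq> 0\<close>])
qed

end

theorem proposition2:
  fixes M :: "'w measure" and A :: "'c set" and Qs WT :: "'c \<Rightarrow> 'w \<Rightarrow> real"
    and eps kh Wb :: real
  assumes "prob_space M"
    and "\<And>P. P \<in> A \<Longrightarrow> integrable M (Qs P)"
    and "\<And>P. P \<in> A \<Longrightarrow> integrable M (WT P)"
    and cont: "\<And>P w. P \<in> A \<Longrightarrow> measure M {\<omega> \<in> space M. WT P \<omega> = w} = 0"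
    and ES_max_exists: "\<And>\<alpha> \<kappa>. 0 < \<alpha> \<Longrightarrow> \<alpha> < 1 \<Longrightarrow> 0 < \<kappa> \<Longrightarrow>
           \<exists>Wst. \<forall>W'. (SUP P\<in>A. ES_inner M Qs WT eps \<alpha> \<kappa> W' P)
                        \<le> (SUP P\<in>A. ES_inner M Qs WT eps \<alpha> \<kappa> Wst P)"
    and "kh > 0"
    and LS_exists: "\<And>W'. \<exists>P. LS_opt M A Qs WT eps W' kh P"
    and well_defined: "\<And>W' P1 P2. LS_opt M A Qs WT eps W' kh P1 \<Longrightarrow> LS_opt M A Qs WT eps W' kh P2
           \<Longrightarrow> prob_below M WT P1 W' = prob_below M WT P2 W'"
    and "(Wb, kh) \<in> D_LS M A Qs WT eps"
    and invertible: "\<And>W'. W' \<noteq> Wb \<Longrightarrow> (W', kh) \<in> D_LS M A Qs WT eps \<Longrightarrow>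
           alpha_star M A Qs WT eps kh W' \<noteq> alpha_star M A Qs WT eps kh Wb"
  shows "0 < alpha_star M A Qs WT eps kh Wb \<and> alpha_star M A Qs WT eps kh Wb < 1
         \<and> 0 < alpha_star M A Qs WT eps kh Wb * kh
         \<and> (\<forall>P. LS_opt M A Qs WT eps Wb kh P \<longrightarrow>
              ES_opt M A Qs WT eps (alpha_star M A Qs WT eps kh Wb)
                                   (alpha_star M A Qs WT eps kh Wb * kh) P)"
proof -
  interpret decumulation_model M A Qs WT eps
    using assms(1-3) by (simp add: decumulation_model_def decumulation_model_axioms_def)
  define a where "a = alpha_star M A Qs WT eps kh Wb"
  have a: "0 < a" "a < 1"
    using \<open>(Wb, kh) \<in> D_LS M A Qs WT eps\<close> by (auto simp: D_LS_def a_def)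
  obtain w where argmax: "\<And>t. (SUP P\<in>A. ES_inner M Qs WT eps a (a * kh) t P)
                              \<le> (SUP P\<in>A. ES_inner M Qs WT eps a (a * kh) w P)"
    using ES_max_exists[OF a mult_pos_pos[OF a(1) \<open>kh > 0\<close>]] by blast
  define P where "P = (SOME P. LS_opt M A Qs WT eps w kh P)"
  have P: "LS_opt M A Qs WT eps w kh P"
    unfolding P_def using LS_exists by (rule someI_ex)
  then have "P \<in> A" by (simp add: LS_opt_def)
  \<comment> \<open>alpha_star chooses this same P.\<close>
  have "alpha_star M A Qs WT eps kh w = a"
    unfolding alpha_star_def P_def[symmetric] using \<open>P \<in> A\<close> a(1) \<open>kh > 0\<close> cont
    by (intro prob_below_eq_at_ES_inner_argmax[where kh = kh]
        ES_inner_le_at_value_argmax[OF LS_exists argmax P]) auto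
  then have "w = Wb"
    using invertible a \<open>kh > 0\<close> unfolding a_def D_LS_def by force
  have "ES_opt M A Qs WT eps a (a * kh) Q" if "LS_opt M A Qs WT eps w kh Q" for Q
    using a(1) by (intro ES_opt_if_LS_opt_at_value_argmax[OF LS_exists argmax that]) simp
  with \<open>w = Wb\<close> show ?thesis
    using a \<open>kh > 0\<close> by (simp add: a_def)
qed

end
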